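(* Let $k\ge1$ be even and let $Q_k\in S_k$. Then the generating function $\sum_{n\ge0}\#_{\mathcal A}\{(0,0)\xrightarrow{n}Q_k\}t^n$ is a rational function of $t$, and its poles of smallest modulus are at $t=\pm\big(2\cos(\tfrac{\pi}{2+k})\big)^{-1}$.
   Context: Let $\mathbb N=\{0,1,2,\dots\}$ and $\mathcal A=\{(-1,1),(1,1),(1,-1)\}$. A quarter-plane walk of length $n$ with steps in $\mathcal A$ is a sequence $p_0=(0,0),p_1,\dots,p_n$ of points of $\mathbb N^2$ with $p_m-p_{m-1}\in\mathcal A$ for all $m$; $\#_{\mathcal A}\{(0,0)\xrightarrow{n}(i,j)\}$ is the number of such walks ending at $(i,j)$. For $k\ge0$, $S_k=\{(k-i,i):0\le i\le k\}$. *)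

theory Defs
  imports Complex_Main "HOL-Computational_Algebra.Polynomial_FPS"
begin

definition stepsA :: "(int \<times> int) set" where
  "stepsA = {(-1,1), (1,1), (1,-1)}"

text \<open>Quarter-plane walks of length n from (0,0), represented as the list of
  visited points p_0, ..., p_n (points of N^2 encoded as nonnegative integer pairs).\<close>
definition qp_walks :: "nat \<Rightarrow> (int \<times> int) list set" where
  "qp_walks n = {ps. length ps = Suc n \<and> ps ! 0 = (0,0) \<and>
      (\<forall>m<n. (fst (ps ! Suc m) - fst (ps ! m), snd (ps ! Suc m) - snd (ps ! m)) \<in> stepsA) \<and>
      (\<forall>p\<in>set ps. 0 \<le> fst p \<and> 0 \<le> snd p)}"

definition walk_count :: "nat \<Rightarrow> int \<times> int \<Rightarrow> nat" where
  "walk_count n Q = card {ps \<in> qp_walks n. last ps = Q}"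

definition walk_gf :: "int \<times> int \<Rightarrow> complex fps" where
  "walk_gf Q = Abs_fps (\<lambda>n. of_nat (walk_count n Q))"

end

theory Submission
  imports Defs "HOL-Library.Function_Algebras" "HOL-Complex_Analysis.Cauchy_Integral_Formula"
    "HOL-Computational_Algebra.Polynomial_Factorial" "HOL-Computational_Algebra.Field_as_Ring"
begin

text \<open>
  No step decreases \<open>a + b\<close>, so the walk counts on the triangle \<open>a, b \<ge> 0, a + b \<le> k\<close> form an
  orbit \<open>T\<^sup>n e\<close> of a linear map \<open>T\<close> on a finite-dimensional space.  Such an orbit is annihilated
  by a polynomial \<open>c\<close> in the shift operator, which makes the generating function rational with
  denominator dividing the reflection of \<open>c\<close>; for \<open>c\<close> of least degree, every root of \<open>c\<close> is
  an eigenvalue of \<open>T\<close>.  On the lowest antidiagonal of its support an eigenvector of \<open>T\<close> is an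
  eigenvector of a path, so the eigenvalues are real of modulus at most
  \<open>\<lambda> = 2 cos (\<pi> / (k + 2))\<close>, and all poles are real of modulus at least \<open>1 / \<lambda>\<close>.
  Walks to \<open>(a, b)\<close> have length of the parity of \<open>a\<close>, so the generating function is even or odd
  and its poles come in pairs \<open>\<plusminus>z\<close>.  Finally, pairing the counts on the antidiagonal
  \<open>a + b = k\<close> with the Perron vector of the path shows that they grow like \<open>\<lambda>\<^sup>n\<close>, which
  forces a pole of modulus at most \<open>1 / \<lambda>\<close>.
\<close>

section \<open>Counting walks\<close>

lemma qp_walks_0: "qp_walks 0 = {[(0,0)]}"
proof -
  have "ps = [(0,0)]" if "length ps = 1" "ps ! 0 = (0,0)" for ps :: "(int \<times> int) list"
    using that by (cases ps) auto
  then show ?thesis by (auto simp: qp_walks_def)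
qed

lemma qp_walks_snoc:
  "ps @ [P] \<in> qp_walks (Suc n) \<longleftrightarrow>
     ps \<in> qp_walks n \<and> (fst P - fst (last ps), snd P - snd (last ps)) \<in> stepsA \<and>
     0 \<le> fst P \<and> 0 \<le> snd P"
proof (cases "length ps = Suc n")
  case True
  define step_ok where
    "step_ok xs m \<longleftrightarrow> (fst (xs ! Suc m) - fst (xs ! m), snd (xs ! Suc m) - snd (xs ! m)) \<in> stepsA"
    for xs :: "(int \<times> int) list" and m
  have "ps \<noteq> []" using True by auto
  then have "last ps = ps ! n" using True by (simp add: last_conv_nth)
  then have "step_ok (ps @ [P]) n \<longleftrightarrow> (fst P - fst (last ps), snd P - snd (last ps)) \<in> stepsA"
    using True by (simp add: step_ok_def nth_append)
  moreover have "step_ok (ps @ [P]) m \<longleftrightarrow> step_ok ps m" if "m < n" for m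
    using that True by (simp add: step_ok_def nth_append)
  ultimately have "(\<forall>m<Suc n. step_ok (ps @ [P]) m) \<longleftrightarrow>
      (\<forall>m<n. step_ok ps m) \<and> (fst P - fst (last ps), snd P - snd (last ps)) \<in> stepsA"
    by (auto simp: less_Suc_eq)
  with True \<open>ps \<noteq> []\<close> show ?thesis
    unfolding qp_walks_def step_ok_def by (auto simp: nth_append)
next
  case False
  then show ?thesis by (simp add: qp_walks_def)
qed

lemma qp_walks_Suc_butlast_last:
  assumes "ps \<in> qp_walks (Suc n)"
  shows "ps = butlast ps @ [last ps]"
  using assms by (simp add: qp_walks_def flip: length_greater_0_conv)

lemma finite_qp_walks: "finite (qp_walks n)"
proof (induction n)
  case 0
  then show ?case by (simp add: qp_walks_0)
next
  case (Suc n)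
  let ?extend = "\<lambda>(ps, d). ps @ [(fst (last ps) + fst d, snd (last ps) + snd d)]"
  have "qp_walks (Suc n) \<subseteq> ?extend ` (qp_walks n \<times> stepsA)"
  proof
    fix ps assume ps: "ps \<in> qp_walks (Suc n)"
    let ?P = "last ps" and ?ps' = "butlast ps"
    have "?ps' \<in> qp_walks n" "(fst ?P - fst (last ?ps'), snd ?P - snd (last ?ps')) \<in> stepsA"
      using ps qp_walks_snoc[of ?ps' ?P n] qp_walks_Suc_butlast_last[OF ps] by auto
    then show "ps \<in> ?extend ` (qp_walks n \<times> stepsA)"
      by (intro image_eqI[where x = "(?ps', (fst ?P - fst (last ?ps'), snd ?P - snd (last ?ps')))"])
        (use qp_walks_Suc_butlast_last[OF ps] in auto)
  qed
  moreover have "finite stepsA" by (simp add: stepsA_def)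
  ultimately show ?case using Suc finite_subset by blast
qed

lemma walk_count_0: "walk_count 0 Q = (if Q = (0,0) then 1 else 0)"
proof -
  have "{ps. ps = [(0::int, 0::int)] \<and> last ps = Q} = (if Q = (0,0) then {[(0,0)]} else {})"
    by auto
  then show ?thesis by (simp add: walk_count_def qp_walks_0)
qed

lemma walk_count_outside_quadrant:
  assumes "\<not> (0 \<le> a \<and> 0 \<le> b)"
  shows "walk_count n (a, b) = 0"
proof -
  have "0 \<le> fst (last ps) \<and> 0 \<le> snd (last ps)" if "ps \<in> qp_walks n" for ps
    using that last_in_set[of ps] by (auto simp: qp_walks_def simp flip: length_greater_0_conv)
  then have "{ps \<in> qp_walks n. last ps = (a, b)} = {}"
    using assms by force
  then show ?thesis unfolding walk_count_def by (metis card.empty)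
qed

lemma walk_count_Suc:
  "walk_count (Suc n) (a, b) =
     (if 0 \<le> a \<and> 0 \<le> b
      then walk_count n (a + 1, b - 1) + walk_count n (a - 1, b - 1) + walk_count n (a - 1, b + 1)
      else 0)"
proof (cases "0 \<le> a \<and> 0 \<le> b")
  case False
  show ?thesis by (subst if_not_P[OF False]) (rule walk_count_outside_quadrant[OF False])
next
  case True
  define ending where "ending P = {ps \<in> qp_walks n. last ps = P}" for P
  have step_iff: "(a - fst P, b - snd P) \<in> stepsA \<longleftrightarrow> P \<in> {(a + 1, b - 1), (a - 1, b - 1), (a - 1, b + 1)}"
    for P :: "int \<times> int"
    by (cases P) (auto simp: stepsA_def)
  have "{ps \<in> qp_walks (Suc n). last ps = (a, b)}
      = (\<lambda>ps. ps @ [(a, b)]) ` (ending (a + 1, b - 1) \<union> ending (a - 1, b - 1) \<union> ending (a - 1, b + 1))"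
  proof (intro equalityI subsetI)
    fix ps assume ps: "ps \<in> {ps \<in> qp_walks (Suc n). last ps = (a, b)}"
    then have "ps = butlast ps @ [(a, b)]"
      using qp_walks_Suc_butlast_last by fastforce
    with ps show "ps \<in> (\<lambda>ps. ps @ [(a, b)]) ` (ending (a + 1, b - 1) \<union> ending (a - 1, b - 1) \<union> ending (a - 1, b + 1))"
      using qp_walks_snoc[of "butlast ps" "(a, b)" n] step_iff[of "last (butlast ps)"]
      by (auto simp: ending_def intro!: image_eqI[where x = "butlast ps"])
  next
    fix ps assume "ps \<in> (\<lambda>ps. ps @ [(a, b)]) ` (ending (a + 1, b - 1) \<union> ending (a - 1, b - 1) \<union> ending (a - 1, b + 1))"
    then show "ps \<in> {ps \<in> qp_walks (Suc n). last ps = (a, b)}"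
      using True qp_walks_snoc step_iff by (auto simp: ending_def stepsA_def)
  qed
  moreover have "finite (ending P)" for P
    using finite_qp_walks by (simp add: ending_def)
  moreover have "inj (\<lambda>ps. ps @ [(a, b)] :: (int \<times> int) list)"
    by (auto intro: injI)
  ultimately have "walk_count (Suc n) (a, b)
      = card (ending (a + 1, b - 1) \<union> ending (a - 1, b - 1) \<union> ending (a - 1, b + 1))"
    unfolding walk_count_def by (simp add: card_image inj_on_def)
  also have "\<dots> = card (ending (a + 1, b - 1)) + card (ending (a - 1, b - 1)) + card (ending (a - 1, b + 1))"
    using \<open>\<And>P. finite (ending P)\<close>
    by (subst card_Un_disjoint, simp_all, fastforce simp: ending_def)+
  finally show ?thesis
    using True by (simp add: ending_def walk_count_def)
qed

lemma walk_count_parity: "walk_count n (a, b) \<noteq> 0 \<Longrightarrow> even (int n + a)"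
proof (induction n arbitrary: a b)
  case 0
  then show ?case by (simp add: walk_count_0 split: if_splits)
next
  case (Suc n)
  then have "walk_count n (a + 1, b - 1) \<noteq> 0 \<or> walk_count n (a - 1, b - 1) \<noteq> 0 \<or>
      walk_count n (a - 1, b + 1) \<noteq> 0"
    by (simp add: walk_count_Suc split: if_splits)
  then have "even (int n + (a + 1)) \<or> even (int n + (a - 1))"
    using Suc.IH by blast
  then show ?case by auto
qed

lemma walk_count_diagonal_pos: "0 < walk_count n (int n, int n)"
proof (induction n)
  case (Suc n)
  then show ?case by (simp add: walk_count_Suc)
qed (simp add: walk_count_0)

lemma walk_count_antidiagonal_mono:
  assumes "0 \<le> j" "j \<le> int k" "0 \<le> t" "t \<le> int k"
  shows "walk_count n (int k - j, j) \<le> walk_count (n + nat \<bar>t - j\<bar>) (int k - t, t)"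
  using assms
proof (induction "nat \<bar>t - j\<bar>" arbitrary: j n)
  case 0
  then show ?case by simp
next
  case (Suc d)
  define j' where "j' = (if j < t then j + 1 else j - 1)"
  have j': "0 \<le> j'" "j' \<le> int k" "d = nat \<bar>t - j'\<bar>"
    using Suc.hyps(2) Suc.prems by (auto simp: j'_def)
  have "walk_count n (int k - j, j) \<le> walk_count (Suc n) (int k - j', j')"
    using j' by (auto simp: walk_count_Suc j'_def algebra_simps)
  also have "\<dots> \<le> walk_count (Suc n + nat \<bar>t - j'\<bar>) (int k - t, t)"
    using Suc.hyps(1) j' Suc.prems by blast
  also have "Suc n + nat \<bar>t - j'\<bar> = n + nat \<bar>t - j\<bar>"
    using Suc.hyps(2) j' by simp
  finally show ?case .
qed

section \<open>Linear recurrences of orbits\<close>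

text \<open>\<open>poly_shift c f\<close> is \<open>c(E) f\<close> for the shift operator \<open>E f n = f (n + 1)\<close>.\<close>
definition poly_shift :: "'a::comm_semiring_1 poly \<Rightarrow> (nat \<Rightarrow> 'a) \<Rightarrow> nat \<Rightarrow> 'a" where
  "poly_shift c f n = (\<Sum>j\<le>degree c. coeff c j * f (n + j))"

lemma poly_shift_eq_sum_atMost:
  "degree c \<le> K \<Longrightarrow> poly_shift c f n = (\<Sum>j\<le>K. coeff c j * f (n + j))"
  unfolding poly_shift_def by (rule sum.mono_neutral_left) (auto simp: coeff_eq_0)

lemma poly_shift_linear_factor:
  fixes h :: "'a::comm_ring_1 poly"
  shows "poly_shift ([:-\<mu>, 1:] * h) f n = poly_shift h f (Suc n) - \<mu> * poly_shift h f n"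
proof -
  define K where "K = Suc (degree h)"
  have "degree ([:-\<mu>, 1:] * h) \<le> K"
    unfolding K_def by (rule order.trans[OF degree_mult_le]) simp
  then have "poly_shift ([:-\<mu>, 1:] * h) f n = (\<Sum>j\<le>K. coeff (pCons 0 h - smult \<mu> h) j * f (n + j))"
    by (simp add: poly_shift_eq_sum_atMost mult_pCons_left)
  also have "\<dots> = (\<Sum>j\<le>K. coeff (pCons 0 h) j * f (n + j)) - \<mu> * (\<Sum>j\<le>K. coeff h j * f (n + j))"
    by (simp add: sum_subtractf sum_distrib_left algebra_simps del: coeff_pCons)
  also have "(\<Sum>j\<le>K. coeff (pCons 0 h) j * f (n + j)) = poly_shift h f (Suc n)"
    unfolding K_def poly_shift_def by (subst sum.atMost_Suc_shift) simp
  also have "(\<Sum>j\<le>K. coeff h j * f (n + j)) = poly_shift h f n"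
    by (rule poly_shift_eq_sum_atMost[symmetric]) (simp add: K_def)
  finally show ?thesis .
qed

lemma fps_reflect_poly_mult_is_poly:
  fixes c :: "'a::comm_semiring_1 poly"
  assumes "\<And>n. poly_shift c f n = 0"
  shows "\<exists>p. fps_of_poly p = fps_of_poly (reflect_poly c) * Abs_fps f"
proof -
  define d where "d = degree c"
  define G where "G = fps_of_poly (reflect_poly c) * Abs_fps f"
  have "fps_nth G m = 0" if "d \<le> m" for m
  proof -
    have "fps_nth G m = (\<Sum>l=0..d. coeff c (d - l) * f (m - l))"
      unfolding G_def fps_mult_nth
      by (rule sum.mono_neutral_cong_right) (use that in \<open>auto simp: coeff_reflect_poly d_def\<close>)
    also have "\<dots> = (\<Sum>j=0..d. coeff c j * f (m - d + j))"
      by (rule sum.reindex_bij_witness[of _ "\<lambda>j. d - j" "\<lambda>l. d - l"]) (use that in auto)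
    also have "\<dots> = poly_shift c f (m - d)"
      by (simp add: poly_shift_def d_def atLeast0AtMost)
    finally show ?thesis using assms by simp
  qed
  then have "fps_of_poly (\<Sum>m<d. monom (fps_nth G m) m) = G"
    by (intro fps_ext) (auto simp: coeff_sum coeff_monom)
  then show ?thesis unfolding G_def by blast
qed

definition fun_scale :: "complex \<Rightarrow> ('a \<Rightarrow> complex) \<Rightarrow> 'a \<Rightarrow> complex" where
  [simp]: "fun_scale c v x = c * v x"

interpretation fun_vs: vector_space "fun_scale :: complex \<Rightarrow> ('a \<Rightarrow> complex) \<Rightarrow> _"
  by unfold_locales (auto simp: fun_eq_iff algebra_simps)

lemma sum_fun_apply: "sum f A x = (\<Sum>a\<in>A. f a x)"
  by (induction A rule: infinite_finite_induct) auto

definition annihilates :: "'b::comm_semiring_1 poly \<Rightarrow> (nat \<Rightarrow> 'a \<Rightarrow> 'b) \<Rightarrow> bool" where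
  "annihilates c u \<longleftrightarrow> (\<forall>x n. poly_shift c (\<lambda>m. u m x) n = 0)"

lemma finite_support_sequence_dependent:
  fixes u :: "nat \<Rightarrow> 'a \<Rightarrow> complex"
  assumes "finite S" and supp: "\<And>n x. x \<notin> S \<Longrightarrow> u n x = 0"
  shows "\<exists>w. (\<exists>l\<le>card S. w l \<noteq> 0) \<and> (\<forall>x. (\<Sum>l\<le>card S. w l * u l x) = 0)"
proof (cases "inj_on u {..card S}")
  case False
  then obtain i j where ij: "i < j" "j \<le> card S" "u i = u j"
    unfolding inj_on_def by (metis atMost_iff linorder_neqE_nat order.strict_implies_order order.strict_trans2)
  define w where "w l = (of_bool (l = j) - of_bool (l = i) :: complex)" for l
  have "(\<Sum>l\<le>card S. w l * u l x)
      = (\<Sum>l\<le>card S. if l = j then u l x else 0) - (\<Sum>l\<le>card S. if l = i then u l x else 0)" for x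
    by (simp add: w_def left_diff_distrib sum_subtractf)
  then have "(\<Sum>l\<le>card S. w l * u l x) = u j x - u i x" for x
    using ij by simp
  then show ?thesis
    using ij by (intro exI[of _ w]) (auto simp: w_def)
next
  case True
  define V where "V = u ` {..card S}"
  define \<delta> where "\<delta> y = (\<lambda>x. if x = y then 1 else 0 :: complex)" for y :: 'a
  have "v \<in> fun_vs.span (\<delta> ` S)" if "v \<in> V" for v
  proof -
    have "v = (\<Sum>y\<in>S. fun_scale (v y) (\<delta> y))"
      using that supp \<open>finite S\<close> by (auto simp: V_def \<delta>_def fun_eq_iff sum_fun_apply if_distrib cong: if_cong)
    also have "\<dots> \<in> fun_vs.span (\<delta> ` S)"
      by (intro fun_vs.span_sum fun_vs.span_scale fun_vs.span_base) auto
    finally show ?thesis .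
  qed
  moreover have "card V = Suc (card S)"
    using True by (simp add: V_def card_image)
  moreover have "card (\<delta> ` S) \<le> card S"
    using \<open>finite S\<close> by (rule card_image_le)
  ultimately have "fun_vs.dependent V"
    using fun_vs.independent_span_bound[of "\<delta> ` S" V] \<open>finite S\<close> by fastforce
  then obtain w where w: "\<exists>v\<in>V. w v \<noteq> 0" "(\<Sum>v\<in>V. fun_scale (w v) v) = 0"
    using fun_vs.dependent_finite[of V] by (auto simp: V_def)
  have "(\<Sum>l\<le>card S. w (u l) * u l x) = 0" for x
    using fun_cong[OF w(2), of x] True
    by (simp add: V_def sum_fun_apply sum.reindex)
  then show ?thesis
    using w(1) by (intro exI[of _ "w \<circ> u"]) (auto simp: V_def)
qed

lemma poly_shift_orbit:
  assumes "Vector_Spaces.linear fun_scale fun_scale A" and "\<And>n. u (Suc n) = A (u n)"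
  shows "(\<lambda>x. poly_shift c (\<lambda>m. u m x) (Suc n)) = A (\<lambda>x. poly_shift c (\<lambda>m. u m x) n)"
proof -
  interpret A: Vector_Spaces.linear fun_scale fun_scale A by fact
  have "(\<lambda>x. poly_shift c (\<lambda>m. u m x) n) = (\<Sum>j\<le>degree c. fun_scale (coeff c j) (u (n + j)))" for n
    by (simp add: poly_shift_def fun_eq_iff sum_fun_apply)
  then show ?thesis
    using assms(2) by (simp add: A.sum A.scale)
qed

lemma annihilator_exists:
  fixes u :: "nat \<Rightarrow> 'a \<Rightarrow> complex"
  assumes "finite S" and "\<And>n x. x \<notin> S \<Longrightarrow> u n x = 0"
    and "Vector_Spaces.linear fun_scale fun_scale A" and "\<And>n. u (Suc n) = A (u n)"
  shows "\<exists>c. c \<noteq> 0 \<and> annihilates c u"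
proof -
  interpret A: Vector_Spaces.linear fun_scale fun_scale A by fact
  obtain w where w: "\<exists>l\<le>card S. w l \<noteq> 0" "\<And>x. (\<Sum>l\<le>card S. w l * u l x) = 0"
    using finite_support_sequence_dependent[of S u, OF assms(1,2)] by blast
  define c where "c = (\<Sum>l\<le>card S. monom (w l) l)"
  have coeff_c: "coeff c l = (if l \<le> card S then w l else 0)" for l
    by (simp add: c_def coeff_sum coeff_monom)
  have "c \<noteq> 0"
    using w(1) coeff_c by (metis coeff_0)
  have "degree c \<le> card S"
    by (rule degree_le) (simp add: coeff_c)
  then have "(\<lambda>x. poly_shift c (\<lambda>m. u m x) 0) = 0"
    using w(2) by (simp add: poly_shift_eq_sum_atMost coeff_c fun_eq_iff)
  then have "(\<lambda>x. poly_shift c (\<lambda>m. u m x) n) = 0" for n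
    by (induction n) (simp_all add: poly_shift_orbit[where A = A and u = u, OF assms(3,4)])
  then show ?thesis
    using \<open>c \<noteq> 0\<close> by (auto simp: annihilates_def fun_eq_iff)
qed

lemma minimal_annihilator_root_eigenvector:
  fixes u :: "nat \<Rightarrow> 'a \<Rightarrow> complex"
  assumes A: "Vector_Spaces.linear fun_scale fun_scale A" "\<And>n. u (Suc n) = A (u n)"
    and c: "c \<noteq> 0" "annihilates c u" "\<And>h. h \<noteq> 0 \<Longrightarrow> annihilates h u \<Longrightarrow> degree c \<le> degree h"
    and root: "poly c \<mu> = 0"
  shows "\<exists>v. v \<noteq> 0 \<and> A v = fun_scale \<mu> v \<and> (\<forall>x. (\<forall>n. u n x = 0) \<longrightarrow> v x = 0)"
proof -
  obtain h where h: "c = [:-\<mu>, 1:] * h"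
    using root by (auto simp: poly_eq_0_iff_dvd)
  have "h \<noteq> 0" using h c(1) by auto
  then have deg: "degree c = Suc (degree h)"
    unfolding h by (subst degree_mult_eq) auto
  define v where "v = (\<lambda>x. poly_shift h (\<lambda>m. u m x) 0)"
  have rec: "poly_shift h (\<lambda>m. u m x) (Suc n) = \<mu> * poly_shift h (\<lambda>m. u m x) n" for x n
    using c(2) poly_shift_linear_factor[of \<mu> h "\<lambda>m. u m x" n] by (simp add: annihilates_def h)
  have "v \<noteq> 0"
  proof
    assume "v = 0"
    then have "poly_shift h (\<lambda>m. u m x) n = 0" for x n
      by (induction n) (simp_all add: rec v_def fun_eq_iff)
    then have "degree c \<le> degree h"
      using c(3)[OF \<open>h \<noteq> 0\<close>] by (simp add: annihilates_def)
    then show False using deg by simp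
  qed
  moreover have "A v = fun_scale \<mu> v"
    using poly_shift_orbit[where A = A and u = u, OF A, of h 0] by (simp add: v_def rec fun_eq_iff)
  moreover have "v x = 0" if "\<forall>n. u n x = 0" for x
    using that by (simp add: v_def poly_shift_def)
  ultimately show ?thesis by blast
qed

section \<open>Eigenvalues of a path\<close>

lemma sum_int_shift_vanishing_ends:
  fixes T :: "int \<Rightarrow> 'a::comm_monoid_add"
  assumes "0 \<le> m" "T (-1) = 0" "T m = 0"
  shows "(\<Sum>i\<in>{0..m}. T (i - 1)) = (\<Sum>i\<in>{0..m}. T i)"
proof -
  have "(\<Sum>i\<in>{0..m}. T (i - 1)) = (\<Sum>j\<in>{-1..m-1}. T j)"
    by (rule sum.reindex_bij_witness[of _ "\<lambda>j. j + 1" "\<lambda>i. i - 1"]) auto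
  also have "\<dots> = (\<Sum>j\<in>{-1..m}. T j)"
  proof -
    have "{-1..m} = insert m {-1..m-1}" using assms(1) by auto
    then show ?thesis using assms(3) by simp
  qed
  also have "\<dots> = (\<Sum>j\<in>{0..m}. T j)"
  proof -
    have "{-1..m} = insert (-1) {0..m}" using assms(1) by auto
    then show ?thesis using assms(2) by simp
  qed
  finally show ?thesis .
qed

lemma path_adjacency_symmetric:
  fixes f g :: "int \<Rightarrow> 'a::comm_ring"
  assumes "0 \<le> m" "f (-1) = 0" "f (m + 1) = 0" "g (-1) = 0" "g (m + 1) = 0"
  shows "(\<Sum>i\<in>{0..m}. f i * (g (i - 1) + g (i + 1))) = (\<Sum>i\<in>{0..m}. g i * (f (i - 1) + f (i + 1)))"
proof -
  have "(\<Sum>i\<in>{0..m}. f i * g (i - 1)) = (\<Sum>i\<in>{0..m}. f (i + 1) * g i)"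
    using sum_int_shift_vanishing_ends[of m "\<lambda>j. f (j + 1) * g j"] assms by simp
  moreover have "(\<Sum>i\<in>{0..m}. f (i - 1) * g i) = (\<Sum>i\<in>{0..m}. f i * g (i + 1))"
    using sum_int_shift_vanishing_ends[of m "\<lambda>j. f j * g (j + 1)"] assms by simp
  ultimately show ?thesis
    by (simp add: distrib_left sum.distrib mult.commute add.commute)
qed

definition path_perron :: "int \<Rightarrow> int \<Rightarrow> real" where
  "path_perron m i = sin (real_of_int (i + 1) * pi / real_of_int (m + 2))"

lemma path_perron_pos:
  assumes "0 \<le> i" "i \<le> m"
  shows "0 < path_perron m i"
  unfolding path_perron_def
proof (rule sin_gt_zero)
  have "real_of_int (i + 1) < real_of_int (m + 2)"
    using assms by simp
  then show "real_of_int (i + 1) * pi / real_of_int (m + 2) < pi"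
    using assms by (simp add: divide_less_eq)
qed (use assms in simp)

lemma path_perron_boundary: "path_perron m (-1) = 0" "path_perron m (m + 1) = 0"
  by (simp_all add: path_perron_def add.assoc)

lemma path_perron_eigen:
  "path_perron m (i - 1) + path_perron m (i + 1) = 2 * cos (pi / real_of_int (m + 2)) * path_perron m i"
proof -
  define a h where "a = real_of_int (i + 1) * pi / real_of_int (m + 2)" and "h = pi / real_of_int (m + 2)"
  have "path_perron m (i - 1) = sin (a - h)" "path_perron m (i + 1) = sin (a + h)" "path_perron m i = sin a"
    by (simp_all add: path_perron_def a_def h_def diff_divide_distrib add_divide_distrib algebra_simps)
  then show ?thesis
    unfolding h_def[symmetric] by (simp add: sin_add sin_diff)
qed

context
  fixes x :: "int \<Rightarrow> complex" and m :: int and \<mu> :: complex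
  assumes m: "0 \<le> m" and ends: "x (-1) = 0" "x (m + 1) = 0"
    and eigen: "\<And>i. 0 \<le> i \<Longrightarrow> i \<le> m \<Longrightarrow> \<mu> * x i = x (i - 1) + x (i + 1)"
    and nonzero: "\<exists>i\<in>{0..m}. x i \<noteq> 0"
begin

text \<open>The path is a symmetric matrix, so \<open>\<langle>x, A x\<rangle> = \<mu> \<parallel>x\<parallel>\<^sup>2\<close> is real.\<close>
lemma path_eigenvalue_real: "\<mu> \<in> \<real>"
proof -
  define N where "N = (\<Sum>i\<in>{0..m}. (cmod (x i))\<^sup>2)"
  obtain j where "j \<in> {0..m}" "x j \<noteq> 0"
    using nonzero by blast
  then have "N > 0"
    unfolding N_def by (intro sum_pos2[of _ j]) auto
  define S where "S = (\<Sum>i\<in>{0..m}. cnj (x i) * (x (i - 1) + x (i + 1)))"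
  have "S = (\<Sum>i\<in>{0..m}. \<mu> * (x i * cnj (x i)))"
    unfolding S_def by (intro sum.cong) (auto simp: eigen[symmetric])
  then have S: "S = \<mu> * of_real N"
    by (simp add: N_def sum_distrib_left complex_norm_square del: of_real_power)
  have "S = (\<Sum>i\<in>{0..m}. x i * (cnj (x (i - 1)) + cnj (x (i + 1))))"
    unfolding S_def using path_adjacency_symmetric[of m "\<lambda>i. cnj (x i)" x] m ends by simp
  also have "\<dots> = cnj S"
    by (simp add: S_def)
  finally have "\<mu> * of_real N = cnj \<mu> * of_real N"
    unfolding S by simp
  then show ?thesis
    using \<open>N > 0\<close> by (simp add: Reals_cnj_iff)
qed

text \<open>Bound \<open>\<bar>x\<bar>\<close> by the Perron vector scaled to touch it where \<open>\<bar>x i\<bar> / \<phi> i\<close> is largest.\<close>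
lemma path_eigenvalue_norm_le: "cmod \<mu> \<le> 2 * cos (pi / real_of_int (m + 2))"
proof -
  define \<phi> where "\<phi> = path_perron m"
  define r where "r i = cmod (x i) / \<phi> i" for i
  obtain i0 where i0: "i0 \<in> {0..m}" "\<And>i. i \<in> {0..m} \<Longrightarrow> r i \<le> r i0"
    using ex_is_arg_min_if_finite[of "{0..m}" "\<lambda>i. - r i"] m by (auto simp: is_arg_min_linorder)
  have \<phi>_pos: "0 < \<phi> i" if "i \<in> {0..m}" for i
    using that path_perron_pos by (simp add: \<phi>_def)
  have bound: "cmod (x j) \<le> r i0 * \<phi> j" if "-1 \<le> j" "j \<le> m + 1" for j
  proof (cases "j = -1 \<or> j = m + 1")
    case True
    then show ?thesis using ends path_perron_boundary by (auto simp: \<phi>_def)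
  next
    case False
    then have "j \<in> {0..m}" using that by auto
    then show ?thesis using i0(2) \<phi>_pos by (simp add: r_def divide_le_eq)
  qed
  have "0 < cmod (x i0)"
  proof -
    obtain i where "i \<in> {0..m}" "x i \<noteq> 0" using nonzero by blast
    then have "0 < r i" using \<phi>_pos by (simp add: r_def)
    then show ?thesis using i0 \<phi>_pos[of i0] \<open>i \<in> {0..m}\<close> by (fastforce simp: r_def divide_pos_pos)
  qed
  have "cmod \<mu> * cmod (x i0) = cmod (x (i0 - 1) + x (i0 + 1))"
    using eigen[of i0] i0(1) by (simp flip: norm_mult)
  also have "\<dots> \<le> cmod (x (i0 - 1)) + cmod (x (i0 + 1))"
    by (rule norm_triangle_ineq)
  also have "\<dots> \<le> r i0 * \<phi> (i0 - 1) + r i0 * \<phi> (i0 + 1)"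
    using bound i0(1) by (intro add_mono) auto
  also have "\<dots> = r i0 * (2 * cos (pi / real_of_int (m + 2)) * \<phi> i0)"
    by (simp add: \<phi>_def path_perron_eigen flip: distrib_left)
  also have "\<dots> = 2 * cos (pi / real_of_int (m + 2)) * cmod (x i0)"
    using \<phi>_pos[OF i0(1)] by (simp add: r_def)
  finally show ?thesis
    using \<open>0 < cmod (x i0)\<close> by simp
qed

end

section \<open>The transfer operator on a triangle\<close>

definition lattice_triangle :: "nat \<Rightarrow> (int \<times> int) set" where
  "lattice_triangle k = {Q. 0 \<le> fst Q \<and> 0 \<le> snd Q \<and> fst Q + snd Q \<le> int k}"

definition triangle_count :: "nat \<Rightarrow> nat \<Rightarrow> int \<times> int \<Rightarrow> complex" where
  "triangle_count k n Q = (if Q \<in> lattice_triangle k then of_nat (walk_count n Q) else 0)"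

definition transfer :: "nat \<Rightarrow> (int \<times> int \<Rightarrow> complex) \<Rightarrow> int \<times> int \<Rightarrow> complex" where
  "transfer k v Q =
     (if Q \<in> lattice_triangle k
      then v (fst Q + 1, snd Q - 1) + v (fst Q - 1, snd Q - 1) + v (fst Q - 1, snd Q + 1)
      else 0)"

lemma finite_lattice_triangle: "finite (lattice_triangle k)"
proof -
  have "lattice_triangle k \<subseteq> {0..int k} \<times> {0..int k}"
    by (auto simp: lattice_triangle_def)
  then show ?thesis
    by (rule finite_subset) auto
qed

lemma linear_transfer: "Vector_Spaces.linear fun_scale fun_scale (transfer k)"
  by unfold_locales (auto simp: transfer_def fun_eq_iff algebra_simps)

lemma triangle_count_eq_walk_count:
  "fst Q + snd Q \<le> int k \<Longrightarrow> triangle_count k n Q = of_nat (walk_count n Q)"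
  by (cases Q) (auto simp: triangle_count_def lattice_triangle_def walk_count_outside_quadrant)

lemma triangle_count_Suc: "triangle_count k (Suc n) = transfer k (triangle_count k n)"
proof
  fix Q :: "int \<times> int"
  obtain a b where Q: "Q = (a, b)" by fastforce
  show "triangle_count k (Suc n) Q = transfer k (triangle_count k n) Q"
  proof (cases "Q \<in> lattice_triangle k")
    case True
    then have "a + b \<le> int k" "0 \<le> a" "0 \<le> b"
      by (auto simp: lattice_triangle_def Q)
    then have "triangle_count k n (a + 1, b - 1) = of_nat (walk_count n (a + 1, b - 1))"
        "triangle_count k n (a - 1, b - 1) = of_nat (walk_count n (a - 1, b - 1))"
        "triangle_count k n (a - 1, b + 1) = of_nat (walk_count n (a - 1, b + 1))"
      by (simp_all add: triangle_count_eq_walk_count)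
    then show ?thesis
      using True \<open>0 \<le> a\<close> \<open>0 \<le> b\<close> by (simp add: Q transfer_def triangle_count_def walk_count_Suc)
  next
    case False
    then show ?thesis by (simp add: triangle_count_def transfer_def)
  qed
qed

text \<open>On the lowest antidiagonal \<open>a + b = L\<close> meeting the support of \<open>v\<close>, the step \<open>(1,1)\<close> contributes
  nothing, so there \<open>v\<close> is an eigenvector of the path on \<open>L + 1\<close> vertices.\<close>
lemma transfer_eigenvalue:
  assumes "v \<noteq> 0" and supp: "\<And>Q. Q \<notin> lattice_triangle k \<Longrightarrow> v Q = 0"
    and eigen: "transfer k v = fun_scale \<mu> v"
  shows "\<mu> \<in> \<real> \<and> cmod \<mu> \<le> 2 * cos (pi / (2 + real k))"
proof -
  define Z where "Z = {Q. v Q \<noteq> 0}"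
  have "Z \<subseteq> lattice_triangle k" using supp by (auto simp: Z_def)
  then have "finite Z" using finite_subset finite_lattice_triangle by blast
  moreover have "Z \<noteq> {}" using \<open>v \<noteq> 0\<close> by (auto simp: Z_def fun_eq_iff)
  ultimately obtain Q0 where "is_arg_min (\<lambda>Q. fst Q + snd Q) (\<lambda>Q. Q \<in> Z) Q0"
    using ex_is_arg_min_if_finite by blast
  then have "Q0 \<in> Z" and Q0_min: "\<And>Q. Q \<in> Z \<Longrightarrow> fst Q0 + snd Q0 \<le> fst Q + snd Q"
    by (auto simp: is_arg_min_linorder)
  define L where "L = fst Q0 + snd Q0"
  have L: "0 \<le> L" "L \<le> int k"
    using \<open>Q0 \<in> Z\<close> \<open>Z \<subseteq> lattice_triangle k\<close> by (auto simp: L_def lattice_triangle_def)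
  define x where "x i = v (L - i, i)" for i
  have ends: "x (-1) = 0" "x (L + 1) = 0"
    unfolding x_def by (auto intro!: supp simp: lattice_triangle_def)
  have "\<mu> * x i = x (i - 1) + x (i + 1)" if "0 \<le> i" "i \<le> L" for i
  proof -
    have "(L - i - 1, i - 1) \<notin> Z"
      using Q0_min[of "(L - i - 1, i - 1)"] by (auto simp: L_def)
    then have "v (L - i - 1, i - 1) = 0"
      by (simp add: Z_def)
    moreover have "(L - i, i) \<in> lattice_triangle k"
      using that L by (auto simp: lattice_triangle_def)
    ultimately show ?thesis
      using fun_cong[OF eigen, of "(L - i, i)"] by (simp add: transfer_def x_def algebra_simps)
  qed
  moreover have "\<exists>i\<in>{0..L}. x i \<noteq> 0"
    using \<open>Q0 \<in> Z\<close> \<open>Z \<subseteq> lattice_triangle k\<close>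
    by (intro bexI[of _ "snd Q0"]) (auto simp: x_def Z_def L_def lattice_triangle_def)
  ultimately have "\<mu> \<in> \<real>" "cmod \<mu> \<le> 2 * cos (pi / real_of_int (L + 2))"
    using path_eigenvalue_real[where x = x and m = L and \<mu> = \<mu>]
      path_eigenvalue_norm_le[where x = x and m = L and \<mu> = \<mu>] L ends by auto
  moreover have "cos (pi / real_of_int (L + 2)) \<le> cos (pi / (2 + real k))"
  proof (rule cos_monotone_0_pi_le)
    have "real_of_int (L + 2) \<le> 2 + real k" using L by simp
    then show "pi / (2 + real k) \<le> pi / real_of_int (L + 2)"
      using L by (intro divide_left_mono) auto
    show "pi / real_of_int (L + 2) \<le> pi"
      using L by (simp add: divide_le_eq)
  qed simp
  ultimately show ?thesis by linarith
qed

lemma triangle_count_annihilator_roots: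
  "\<exists>c. c \<noteq> 0 \<and> annihilates c (triangle_count k) \<and>
       (\<forall>\<mu>. poly c \<mu> = 0 \<longrightarrow> \<mu> \<in> \<real> \<and> cmod \<mu> \<le> 2 * cos (pi / (2 + real k)))"
proof -
  have supp: "\<And>n Q. Q \<notin> lattice_triangle k \<Longrightarrow> triangle_count k n Q = 0"
    by (simp add: triangle_count_def)
  obtain c0 where "c0 \<noteq> 0 \<and> annihilates c0 (triangle_count k)"
    using annihilator_exists[where u = "triangle_count k" and A = "transfer k", OF finite_lattice_triangle supp
        linear_transfer triangle_count_Suc] by blast
  then obtain c where c: "c \<noteq> 0" "annihilates c (triangle_count k)"
    and minimal: "\<And>h. h \<noteq> 0 \<Longrightarrow> annihilates h (triangle_count k) \<Longrightarrow> degree c \<le> degree h"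
    using ex_has_least_nat[of "\<lambda>c. c \<noteq> 0 \<and> annihilates c (triangle_count k)" c0 degree] by blast
  have "\<mu> \<in> \<real> \<and> cmod \<mu> \<le> 2 * cos (pi / (2 + real k))" if root: "poly c \<mu> = 0" for \<mu>
  proof -
    obtain v where "v \<noteq> 0" "transfer k v = fun_scale \<mu> v" "\<And>Q. (\<forall>n. triangle_count k n Q = 0) \<Longrightarrow> v Q = 0"
      using minimal_annihilator_root_eigenvector[where u = "triangle_count k" and A = "transfer k",
          OF linear_transfer triangle_count_Suc c minimal root] by blast
    then show ?thesis
      using transfer_eigenvalue supp by blast
  qed
  with c show ?thesis by blast
qed

section \<open>Growth along the top antidiagonal\<close>

lemma cos_pi_div_two_plus_pos: "0 < k \<Longrightarrow> 0 < cos (pi / (2 + real k))"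
proof (rule cos_gt_zero_pi)
  show "pi / (2 + real k) < pi / 2" if "0 < k"
    using that by (intro divide_strict_left_mono) auto
  have "0 < pi / (2 + real k)"
    by simp
  then show "- (pi / 2) < pi / (2 + real k)"
    using pi_gt_zero by linarith
qed

lemma geometric_growth:
  fixes s :: "nat \<Rightarrow> real"
  assumes "0 \<le> \<gamma>" and step: "\<And>n. \<gamma> * s n \<le> s (Suc n)" and "n0 \<le> n"
  shows "\<gamma> ^ (n - n0) * s n0 \<le> s n"
  using \<open>n0 \<le> n\<close>
proof (induction n rule: dec_induct)
  case (step n)
  have "\<gamma> ^ (Suc n - n0) * s n0 = \<gamma> * (\<gamma> ^ (n - n0) * s n0)"
    using step.hyps by (simp add: Suc_diff_le)
  also have "\<dots> \<le> \<gamma> * s n"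
    using step.IH \<open>0 \<le> \<gamma>\<close> by (rule mult_left_mono)
  also have "\<dots> \<le> s (Suc n)"
    by (rule assms(2))
  finally show ?case .
qed simp

lemma delayed_lower_bound_not_tendsto_zero:
  fixes a :: "nat \<Rightarrow> real"
  assumes "0 < c" "0 < \<rho>" "1 \<le> \<gamma> * \<rho>"
    and bound: "\<And>n. n0 \<le> n \<Longrightarrow> \<exists>d\<le>D. c * \<gamma> ^ n \<le> a (n + d)"
  shows "\<not> (\<lambda>n. a n * \<rho> ^ n) \<longlonglongrightarrow> 0"
proof
  assume "(\<lambda>n. a n * \<rho> ^ n) \<longlonglongrightarrow> 0"
  moreover define \<epsilon> where "\<epsilon> = c * min 1 \<rho> ^ D"
  moreover have "0 < \<epsilon>"
    using assms by (simp add: \<epsilon>_def)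
  ultimately obtain N where N: "\<And>n. N \<le> n \<Longrightarrow> \<bar>a n * \<rho> ^ n\<bar> < \<epsilon>"
    by (metis LIMSEQ_D diff_zero real_norm_def)
  obtain d where "d \<le> D" and d: "c * \<gamma> ^ max n0 N \<le> a (max n0 N + d)"
    using bound[of "max n0 N"] by auto
  have "\<epsilon> \<le> c * \<rho> ^ d"
    unfolding \<epsilon>_def using \<open>d \<le> D\<close> assms(1,2)
    by (intro mult_left_mono order.trans[OF power_decreasing power_mono]) auto
  also have "\<dots> \<le> c * (\<gamma> * \<rho>) ^ max n0 N * \<rho> ^ d"
    using assms one_le_power[OF assms(3)] by simp
  also have "\<dots> = c * \<gamma> ^ max n0 N * \<rho> ^ (max n0 N + d)"
    by (simp add: power_add power_mult_distrib)
  also have "\<dots> \<le> a (max n0 N + d) * \<rho> ^ (max n0 N + d)"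
    using d assms(2) by (simp add: mult_right_mono)
  finally have "\<epsilon> \<le> \<bar>a (max n0 N + d) * \<rho> ^ (max n0 N + d)\<bar>"
    by linarith
  then show False
    using N[OF trans_le_add1[OF max.cobounded2]] by (simp add: not_less[symmetric])
qed

definition antidiagonal_weight :: "nat \<Rightarrow> nat \<Rightarrow> real" where
  "antidiagonal_weight k n = (\<Sum>j\<in>{0..int k}. path_perron (int k) j * real (walk_count n (int k - j, j)))"

lemma antidiagonal_weight_Suc:
  "2 * cos (pi / (2 + real k)) * antidiagonal_weight k n \<le> antidiagonal_weight k (Suc n)"
proof -
  define \<phi> where "\<phi> = path_perron (int k)"
  define y where "y j = real (walk_count n (int k - j, j))" for j
  have y_ends: "y (-1) = 0" "y (int k + 1) = 0"
    by (simp_all add: y_def walk_count_outside_quadrant)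
  have "2 * cos (pi / (2 + real k)) * antidiagonal_weight k n = (\<Sum>j\<in>{0..int k}. y j * (\<phi> (j - 1) + \<phi> (j + 1)))"
    by (simp add: antidiagonal_weight_def sum_distrib_left path_perron_eigen \<phi>_def y_def add.commute mult_ac)
  also have "\<dots> = (\<Sum>j\<in>{0..int k}. \<phi> j * (y (j - 1) + y (j + 1)))"
    using path_adjacency_symmetric[of "int k" y \<phi>] y_ends path_perron_boundary by (simp add: \<phi>_def)
  also have "\<dots> \<le> antidiagonal_weight k (Suc n)"
    unfolding antidiagonal_weight_def
  proof (rule sum_mono)
    fix j assume j: "j \<in> {0..int k}"
    then have "y (j - 1) + y (j + 1) \<le> real (walk_count (Suc n) (int k - j, j))"
      by (simp add: y_def walk_count_Suc algebra_simps)
    then show "\<phi> j * (y (j - 1) + y (j + 1)) \<le> path_perron (int k) j * real (walk_count (Suc n) (int k - j, j))"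
      using path_perron_pos[of j "int k"] j by (simp add: \<phi>_def)
  qed
  finally show ?thesis .
qed

lemma antidiagonal_weight_pos:
  assumes "even k"
  shows "0 < antidiagonal_weight k (k div 2)"
  unfolding antidiagonal_weight_def
proof (rule sum_pos2)
  let ?h = "int (k div 2)"
  show "?h \<in> {0..int k}" by auto
  have "int k - ?h = ?h" using assms by auto
  then show "0 < path_perron (int k) ?h * real (walk_count (k div 2) (int k - ?h, ?h))"
    using walk_count_diagonal_pos[of "k div 2"] path_perron_pos[of ?h "int k"] by simp
  show "0 \<le> path_perron (int k) j * real (walk_count (k div 2) (int k - j, j))" if "j \<in> {0..int k}" for j
    using path_perron_pos[of j "int k"] that by simp
qed simp

lemma antidiagonal_weight_le:
  "\<exists>j\<in>{0..int k}. antidiagonal_weight k n \<le> (real k + 1) * real (walk_count n (int k - j, j))"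
proof -
  define y where "y j = real (walk_count n (int k - j, j))" for j
  obtain j where j: "is_arg_min (\<lambda>j. - y j) (\<lambda>j. j \<in> {0..int k}) j"
    using ex_is_arg_min_if_finite[of "{0..int k}" "\<lambda>j. - y j"] by auto
  have "antidiagonal_weight k n \<le> (\<Sum>i\<in>{0..int k}. y j)"
    unfolding antidiagonal_weight_def
  proof (rule sum_mono)
    fix i assume "i \<in> {0..int k}"
    then have "y i \<le> y j" using j by (auto simp: is_arg_min_linorder)
    moreover have "path_perron (int k) i * y i \<le> 1 * y i"
      by (rule mult_right_mono) (simp_all add: path_perron_def y_def)
    ultimately show "path_perron (int k) i * real (walk_count n (int k - i, i)) \<le> y j"
      by (simp add: y_def)
  qed
  also have "\<dots> = (real k + 1) * y j"
    by simp
  finally show ?thesis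
    using j by (auto simp: y_def is_arg_min_linorder)
qed

lemma walk_count_lower_bound:
  assumes "even k" "0 < k" "0 \<le> t" "t \<le> int k"
  shows "\<exists>c>0. \<forall>n\<ge>k div 2. \<exists>d\<le>k.
           c * (2 * cos (pi / (2 + real k))) ^ n \<le> real (walk_count (n + d) (int k - t, t))"
proof -
  define \<gamma> where "\<gamma> = 2 * cos (pi / (2 + real k))"
  define n0 where "n0 = k div 2"
  have "0 < cos (pi / (2 + real k))"
    using assms(2) by (rule cos_pi_div_two_plus_pos)
  then have "0 < \<gamma>"
    by (simp add: \<gamma>_def)
  define c where "c = antidiagonal_weight k n0 / ((real k + 1) * \<gamma> ^ n0)"
  have "0 < c"
    using antidiagonal_weight_pos[OF assms(1)] \<open>0 < \<gamma>\<close> by (simp add: c_def n0_def)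
  moreover have "\<exists>d\<le>k. c * \<gamma> ^ n \<le> real (walk_count (n + d) (int k - t, t))" if "n0 \<le> n" for n
  proof -
    obtain j where j: "j \<in> {0..int k}"
      and le: "antidiagonal_weight k n \<le> (real k + 1) * real (walk_count n (int k - j, j))"
      using antidiagonal_weight_le by blast
    have "c * \<gamma> ^ n = \<gamma> ^ (n - n0) * antidiagonal_weight k n0 / (real k + 1)"
      using that \<open>0 < \<gamma>\<close> by (simp add: c_def power_diff field_simps)
    also have "\<dots> \<le> antidiagonal_weight k n / (real k + 1)"
      using geometric_growth[of \<gamma> "antidiagonal_weight k" n0 n] antidiagonal_weight_Suc \<open>0 < \<gamma>\<close> that
      by (simp add: \<gamma>_def divide_right_mono)
    also have "\<dots> \<le> real (walk_count n (int k - j, j))"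
      using le by (simp add: field_simps)
    also have "\<dots> \<le> real (walk_count (n + nat \<bar>t - j\<bar>) (int k - t, t))"
      using walk_count_antidiagonal_mono[of j k t n] j assms by simp
    finally show ?thesis
      using j assms by (intro exI[of _ "nat \<bar>t - j\<bar>"]) auto
  qed
  ultimately show ?thesis
    unfolding \<gamma>_def n0_def by blast
qed

section \<open>Rational power series\<close>

lemma fps_fraction_coprime:
  fixes p0 q0 :: "'a::field_gcd poly"
  assumes "fps_of_poly p0 = fps_of_poly q0 * F" and "q0 \<noteq> 0"
  shows "\<exists>p q. q \<noteq> 0 \<and> q dvd q0 \<and> coprime p q \<and> fps_of_poly p = fps_of_poly q * F"
proof -
  define g where "g = gcd p0 q0"
  define p q where "p = p0 div g" and "q = q0 div g"
  have "g \<noteq> 0" "p0 = p * g" "q0 = q * g"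
    using assms(2) by (simp_all add: g_def p_def q_def)
  then have "fps_of_poly p * fps_of_poly g = (fps_of_poly q * F) * fps_of_poly g"
    using assms(1) by (simp add: fps_of_poly_mult mult_ac)
  moreover have "fps_of_poly g \<noteq> 0"
    using \<open>g \<noteq> 0\<close> by (simp flip: fps_of_poly_0 add: fps_of_poly_eq_iff)
  ultimately have "fps_of_poly p = fps_of_poly q * F"
    by simp
  moreover have "coprime p q"
    unfolding p_def q_def g_def using assms(2) by (intro div_gcd_coprime) auto
  moreover have "q \<noteq> 0" "q dvd q0"
    using assms(2) \<open>q0 = q * g\<close> by auto
  ultimately show ?thesis by blast
qed

lemma coprime_fraction_poles_symmetric:
  fixes p q :: "'a::field_gcd poly"
  assumes eq: "fps_of_poly p = fps_of_poly q * F" and "coprime p q"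
    and F: "fps_compose F (- fps_X) = fps_const \<sigma> * F" and "\<sigma> \<noteq> 0"
    and "poly q z = 0"
  shows "poly q (- z) = 0"
proof -
  define p' q' where "p' = pcompose p [:0, -1:]" and "q' = pcompose q [:0, -1:]"
  have neg_X: "fps_of_poly [:0, -1:] = (- fps_X :: 'a fps)"
    by (rule fps_ext) (simp add: coeff_pCons split: nat.split)
  have compose: "fps_of_poly (pcompose r [:0, -1:]) = fps_compose (fps_of_poly r) (- fps_X)"
    for r :: "'a poly"
    by (metis fps_of_poly_pcompose neg_X coeff_pCons_0)
  have "fps_of_poly p' = fps_of_poly q' * (fps_const \<sigma> * F)"
    unfolding p'_def q'_def compose eq by (simp add: fps_compose_mult_distrib F)
  then have "fps_of_poly (p' * q) = fps_of_poly (smult \<sigma> (q' * p))"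
    by (simp add: fps_of_poly_mult fps_of_poly_smult eq mult_ac)
  then have "q dvd smult \<sigma> (q' * p)"
    by (metis dvd_triv_right fps_of_poly_eq_iff)
  then have "q dvd q' * p"
    using \<open>\<sigma> \<noteq> 0\<close> by (rule dvd_smult_cancel)
  then have "q dvd q'"
    using \<open>coprime p q\<close> by (simp add: coprime_dvd_mult_left_iff coprime_commute)
  then have "poly q' z = 0"
    using \<open>poly q z = 0\<close> by (auto elim: dvdE)
  then show ?thesis
    by (simp add: q'_def poly_pcompose)
qed

lemma rational_fps_decays:
  fixes F :: "complex fps"
  assumes eq: "fps_of_poly p = fps_of_poly q * F" and "q \<noteq> 0" and "0 \<le> r"
    and roots: "\<And>z. poly q z = 0 \<Longrightarrow> r < cmod z"
  shows "\<exists>\<rho>>r. (\<lambda>n. fps_nth F n * of_real \<rho> ^ n) \<longlonglongrightarrow> 0"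
proof -
  define R where "R = Min (insert (r + 1) (cmod ` {z. poly q z = 0}))"
  have "finite {z. poly q z = 0}"
    using \<open>q \<noteq> 0\<close> by (rule poly_roots_finite)
  then have "r < R" and R: "\<And>z. poly q z = 0 \<Longrightarrow> R \<le> cmod z"
    using roots by (auto simp: R_def)
  have "poly q 0 \<noteq> 0"
    using roots[of 0] \<open>0 \<le> r\<close> by auto
  then have "F = inverse (fps_of_poly q) * fps_of_poly p"
    using eq by (simp add: poly_0_coeff_0 inverse_mult_eq_1 flip: mult.assoc)
  moreover have "ereal R \<le> fps_conv_radius (inverse (fps_of_poly q))"
    using fps_conv_radius_inverse[where f = "fps_of_poly q" and r = R] R by force
  ultimately have "ereal R \<le> fps_conv_radius F"
    using fps_conv_radius_mult[of "inverse (fps_of_poly q)" "fps_of_poly p"] by simp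
  define \<rho> where "\<rho> = (r + R) / 2"
  have "r < \<rho>" "\<rho> < R"
    using \<open>r < R\<close> by (auto simp: \<rho>_def)
  then have "ereal (norm (of_real \<rho> :: complex)) < fps_conv_radius F"
    using \<open>0 \<le> r\<close> \<open>ereal R \<le> fps_conv_radius F\<close> by (auto intro: less_le_trans[of _ "ereal R"])
  then have "(\<lambda>n. fps_nth F n * of_real \<rho> ^ n) \<longlonglongrightarrow> 0"
    by (intro summable_LIMSEQ_zero summable_fps)
  with \<open>r < \<rho>\<close> show ?thesis by blast
qed

lemma Reals_eq_pm_norm:
  assumes "z \<in> \<real>" and "cmod z = r"
  shows "z = of_real r \<or> z = - of_real r"
  using assms by (auto elim!: Reals_cases simp: abs_if)

lemma min_modulus_points:
  fixes Z :: "complex set"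
  assumes outside: "\<And>z. z \<in> Z \<Longrightarrow> z \<in> \<real> \<and> r \<le> cmod z"
    and symmetric: "\<And>z. z \<in> Z \<Longrightarrow> - z \<in> Z"
    and "z0 \<in> Z" and "cmod z0 \<le> r"
  shows "{z \<in> Z. \<forall>w\<in>Z. cmod z \<le> cmod w} = {of_real r, - of_real r}"
proof -
  have "cmod z0 = r"
    using outside[OF \<open>z0 \<in> Z\<close>] \<open>cmod z0 \<le> r\<close> by simp
  then have "z0 = of_real r \<or> z0 = - of_real r" "0 \<le> r"
    using Reals_eq_pm_norm[of z0 r] outside[OF \<open>z0 \<in> Z\<close>] by auto
  then have "of_real r \<in> Z" "- of_real r \<in> Z"
    using \<open>z0 \<in> Z\<close> symmetric[OF \<open>z0 \<in> Z\<close>] by auto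
  show ?thesis
  proof (intro equalityI subsetI)
    fix z :: complex assume "z \<in> {z \<in> Z. \<forall>w\<in>Z. cmod z \<le> cmod w}"
    then have "z \<in> Z" "cmod z \<le> r"
      using \<open>of_real r \<in> Z\<close> \<open>0 \<le> r\<close> by auto
    then show "z \<in> {of_real r, - of_real r}"
      using outside Reals_eq_pm_norm[of z r] by force
  next
    fix z :: complex assume "z \<in> {of_real r, - of_real r}"
    then have "z \<in> Z" "cmod z = r"
      using \<open>of_real r \<in> Z\<close> \<open>- of_real r \<in> Z\<close> \<open>0 \<le> r\<close> by auto
    then show "z \<in> {z \<in> Z. \<forall>w\<in>Z. cmod z \<le> cmod w}"
      using outside by auto
  qed
qed

section \<open>The generating function\<close>

lemma walk_gf_reflect:
  "fps_compose (walk_gf (int a, b)) (- fps_X) = fps_const ((-1) ^ a) * walk_gf (int a, b)"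
proof (rule fps_ext)
  fix n
  have "(-1) ^ n * of_nat (walk_count n (int a, b)) = (-1) ^ a * (of_nat (walk_count n (int a, b)) :: complex)"
  proof (cases "walk_count n (int a, b) = 0")
    case False
    then have "even (n + a)"
      using walk_count_parity by fastforce
    then show ?thesis
      by (simp add: minus_one_power_iff)
  qed simp
  then show "fps_nth (fps_compose (walk_gf (int a, b)) (- fps_X)) n = fps_nth (fps_const ((-1) ^ a) * walk_gf (int a, b)) n"
    by (simp add: fps_compose_uminus' walk_gf_def)
qed

lemma walk_gf_fraction:
  assumes "i \<le> k"
  shows "\<exists>p q. q \<noteq> 0 \<and> coprime p q \<and> fps_of_poly p = fps_of_poly q * walk_gf (int k - int i, int i) \<and>
           (\<forall>z. poly q z = 0 \<longrightarrow> z \<in> \<real> \<and> 1 / (2 * cos (pi / (2 + real k))) \<le> cmod z)"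
proof -
  define T where "T = (int k - int i, int i)"
  define \<gamma> where "\<gamma> = 2 * cos (pi / (2 + real k))"
  obtain c where c: "c \<noteq> 0" "annihilates c (triangle_count k)"
    and roots: "\<And>\<mu>. poly c \<mu> = 0 \<Longrightarrow> \<mu> \<in> \<real> \<and> cmod \<mu> \<le> \<gamma>"
    using triangle_count_annihilator_roots unfolding \<gamma>_def by blast
  have "Abs_fps (\<lambda>n. triangle_count k n T) = walk_gf T"
    using assms by (simp add: T_def triangle_count_def lattice_triangle_def walk_gf_def)
  moreover have "poly_shift c (\<lambda>n. triangle_count k n T) n = 0" for n
    using c(2) unfolding annihilates_def by blast
  ultimately obtain p0 where "fps_of_poly p0 = fps_of_poly (reflect_poly c) * walk_gf T"
    using fps_reflect_poly_mult_is_poly[of c "\<lambda>n. triangle_count k n T"] by auto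
  moreover have "reflect_poly c \<noteq> 0"
    using c(1) by simp
  ultimately obtain p q where pq: "q \<noteq> 0" "q dvd reflect_poly c" "coprime p q"
    "fps_of_poly p = fps_of_poly q * walk_gf T"
    using fps_fraction_coprime[of _ "reflect_poly c" "walk_gf T"] by metis
  have "z \<in> \<real> \<and> 1 / \<gamma> \<le> cmod z" if "poly q z = 0" for z
  proof -
    have "poly (reflect_poly c) z = 0"
      using that pq(2) by (auto elim: dvdE)
    moreover have "z \<noteq> 0"
      using calculation c(1) by (auto simp: poly_reflect_poly_0)
    ultimately have "inverse z \<in> \<real>" "inverse (cmod z) \<le> \<gamma>"
      using roots[of "inverse z"] poly_reflect_poly_nz[of z c] by (auto simp: norm_inverse)
    moreover have "0 < cmod z"
      using \<open>z \<noteq> 0\<close> by simp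
    moreover from calculation have "0 < \<gamma>"
      by (meson inverse_positive_iff_positive less_le_trans)
    ultimately show ?thesis
      using Reals_inverse[of "inverse z"] by (simp add: divide_le_eq field_simps)
  qed
  with pq show ?thesis
    unfolding T_def \<gamma>_def by blast
qed

lemma walk_gf_pole_in_disc:
  assumes "even k" "0 < k" "i \<le> k"
    and eq: "fps_of_poly p = fps_of_poly q * walk_gf (int k - int i, int i)" and "q \<noteq> 0"
  shows "\<exists>z. poly q z = 0 \<and> cmod z \<le> 1 / (2 * cos (pi / (2 + real k)))"
proof (rule ccontr)
  define \<gamma> where "\<gamma> = 2 * cos (pi / (2 + real k))"
  have "0 < \<gamma>"
    using cos_pi_div_two_plus_pos[OF \<open>0 < k\<close>] by (simp add: \<gamma>_def)
  assume "\<not> ?thesis"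
  then have "\<And>z. poly q z = 0 \<Longrightarrow> 1 / \<gamma> < cmod z"
    by (force simp: \<gamma>_def)
  then obtain \<rho> where "1 / \<gamma> < \<rho>" and "(\<lambda>n. fps_nth (walk_gf (int k - int i, int i)) n * of_real \<rho> ^ n) \<longlonglongrightarrow> 0"
    using rational_fps_decays[OF eq \<open>q \<noteq> 0\<close>, of "1 / \<gamma>"] \<open>0 < \<gamma>\<close> by auto
  moreover have "0 < \<rho>"
    using \<open>0 < \<gamma>\<close> \<open>1 / \<gamma> < \<rho>\<close> by (meson divide_pos_pos less_trans zero_less_one)
  ultimately have "(\<lambda>n. real (walk_count n (int k - int i, int i)) * \<rho> ^ n) \<longlonglongrightarrow> 0"
    using tendsto_norm_zero by (fastforce simp: walk_gf_def norm_mult norm_power)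
  moreover obtain c where "0 < c"
    and "\<And>n. k div 2 \<le> n \<Longrightarrow> \<exists>d\<le>k. c * \<gamma> ^ n \<le> real (walk_count (n + d) (int k - int i, int i))"
    using walk_count_lower_bound[of k "int i"] assms unfolding \<gamma>_def by auto
  moreover have "1 \<le> \<gamma> * \<rho>"
    using \<open>1 / \<gamma> < \<rho>\<close> \<open>0 < \<gamma>\<close> by (simp add: field_simps)
  ultimately show False
    using delayed_lower_bound_not_tendsto_zero[of c \<rho> \<gamma> "k div 2" k "\<lambda>n. real (walk_count n (int k - int i, int i))"]
      \<open>0 < \<rho>\<close> by blast
qed

theorem lemma2p7:
  fixes k i :: nat
  assumes "k \<ge> 1" and "even k" and "i \<le> k"
  shows "\<exists>p q :: complex poly. q \<noteq> 0 \<and> coprime p q \<and>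
           fps_of_poly p = fps_of_poly q * walk_gf (int k - int i, int i) \<and>
           {z. poly q z = 0 \<and> (\<forall>w. poly q w = 0 \<longrightarrow> norm z \<le> norm w)}
             = {complex_of_real (1 / (2 * cos (pi / (2 + real k)))),
                - complex_of_real (1 / (2 * cos (pi / (2 + real k))))}"
proof -
  define r where "r = 1 / (2 * cos (pi / (2 + real k)))"
  obtain p q where pq: "q \<noteq> 0" "coprime p q" "fps_of_poly p = fps_of_poly q * walk_gf (int k - int i, int i)"
    and poles: "\<And>z. poly q z = 0 \<Longrightarrow> z \<in> \<real> \<and> r \<le> cmod z"
    using walk_gf_fraction[OF \<open>i \<le> k\<close>] unfolding r_def by blast
  have reflect: "fps_compose (walk_gf (int k - int i, int i)) (- fps_X)
      = fps_const ((-1) ^ (k - i)) * walk_gf (int k - int i, int i)"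
    using walk_gf_reflect[of "k - i" "int i"] \<open>i \<le> k\<close> by (simp add: of_nat_diff)
  have "poly q (- z) = 0" if "poly q z = 0" for z
    by (rule coprime_fraction_poles_symmetric[OF pq(3,2) reflect]) (simp_all add: that)
  moreover obtain z0 where "poly q z0 = 0" "cmod z0 \<le> r"
    using walk_gf_pole_in_disc[OF \<open>even k\<close> _ \<open>i \<le> k\<close> pq(3,1)] \<open>k \<ge> 1\<close> unfolding r_def by auto
  ultimately have "{z \<in> {z. poly q z = 0}. \<forall>w\<in>{z. poly q z = 0}. cmod z \<le> cmod w} = {of_real r, - of_real r}"
    using min_modulus_points[of "{z. poly q z = 0}" r z0] poles by simp
  then have "{z. poly q z = 0 \<and> (\<forall>w. poly q w = 0 \<longrightarrow> norm z \<le> norm w)} = {of_real r, - of_real r}"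
    by simp
  with pq show ?thesis
    unfolding r_def by blast
qed

end
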